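(* Assume $0<c<1$ and let $b=\tfrac12-c$. For each $\delta>0$ there is an irreducible aperiodic Markov subsystem $T:\bigcup_{j=1}^mJ_j\to\mathbb T$ whose maximal invariant set contains $K_\delta:=\{x\in\mathbb T:d(T^nx,b)\ge\delta\ \forall n\ge0\}$ and does not contain $b$.
   Context: $\mathbb T=\mathbb R/\mathbb Z$, $Tx=2x\bmod1$, $d$ the usual distance on $\mathbb T$. A Markov subsystem $T:\bigcup_{j=1}^mJ_j\to\mathbb T$ is given by closed subintervals $J_1,\dots,J_m$ of $\mathbb T\setminus\{b\}$ with pairwise disjoint interiors such that $T|_{J_j}$ is a homeomorphism onto the subinterval $T(J_j)$ for each $j$, and for each $j,k$ either $T(J_j^o)\cap J_k^o=\emptyset$ or $T(J_j)\supset J_k$. Its maximal invariant set is $\bigcap_{n\ge1}T^{-n}(J_1\cup\dots\cup J_m)$ (intersected with $\bigcup_jJ_j$). It is irreducible if for all $j,k$ there are $j_0=j,j_1,\dots,j_s=k$ with $T(J_{j_i})\supset J_{j_{i+1}}$ for $0\le i<s$, and an irreducible one is aperiodic if there is $N\ge1$ such that for all $j,k$ there are $j_0=j,\dots,j_N=k$ with $T(J_{j_i})\supset J_{j_{i+1}}$ for $0\le i<N$. *)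

theory Defs
  imports "HOL-Analysis.Analysis"
begin

text \<open>The circle T = R/Z is represented by the representatives in [0,1);
  the projection R -> T is frac.\<close>

definition circ :: "real set" where
  "circ = {0..<1}"

definition dbl :: "real \<Rightarrow> real" where
  "dbl x = frac (2 * x)"

definition dT :: "real \<Rightarrow> real \<Rightarrow> real" where
  "dT x y = min (frac (x - y)) (1 - frac (x - y))"

text \<open>Closed arc of T starting at (the image of) a with length l, and its interior
  (for 0 < l < 1 this is the interior in the circle topology).\<close>
definition arc :: "real \<Rightarrow> real \<Rightarrow> real set" where
  "arc a l = {frac t | t. a \<le> t \<and> t \<le> a + l}"

definition arc_open :: "real \<Rightarrow> real \<Rightarrow> real set" where
  "arc_open a l = {frac t | t. a < t \<and> t < a + l}"

definition is_closed_subinterval :: "real set \<Rightarrow> bool" where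
  "is_closed_subinterval S \<longleftrightarrow> (\<exists>a l. 0 < l \<and> l < 1 \<and> S = arc a l)"

text \<open>Markov subsystem given by the m intervals J_j = arc (a j) (l j), j < m,
  contained in T minus {b}.  The homeomorphism condition of T restricted to J_j onto a
  subinterval is expressed as injectivity plus image being a closed subinterval
  (continuity of the doubling map on the circle is automatic, and a continuous
  bijection from a compact space to a Hausdorff space is a homeomorphism).\<close>
definition markov_subsystem :: "real \<Rightarrow> nat \<Rightarrow> (nat \<Rightarrow> real) \<Rightarrow> (nat \<Rightarrow> real) \<Rightarrow> bool" where
  "markov_subsystem b m a l \<longleftrightarrow>
     1 \<le> m \<and>
     (\<forall>j<m. 0 < l j \<and> l j < 1 \<and> b \<notin> arc (a j) (l j)) \<and>
     (\<forall>j<m. \<forall>k<m. j \<noteq> k \<longrightarrow> arc_open (a j) (l j) \<inter> arc_open (a k) (l k) = {}) \<and>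
     (\<forall>j<m. inj_on dbl (arc (a j) (l j)) \<and> is_closed_subinterval (dbl ` arc (a j) (l j))) \<and>
     (\<forall>j<m. \<forall>k<m. dbl ` arc_open (a j) (l j) \<inter> arc_open (a k) (l k) = {}
                   \<or> arc (a k) (l k) \<subseteq> dbl ` arc (a j) (l j))"

definition trans_graph :: "nat \<Rightarrow> (nat \<Rightarrow> real) \<Rightarrow> (nat \<Rightarrow> real) \<Rightarrow> (nat \<times> nat) set" where
  "trans_graph m a l = {(j, k). j < m \<and> k < m \<and> arc (a k) (l k) \<subseteq> dbl ` arc (a j) (l j)}"

definition irreducible_ms :: "nat \<Rightarrow> (nat \<Rightarrow> real) \<Rightarrow> (nat \<Rightarrow> real) \<Rightarrow> bool" where
  "irreducible_ms m a l \<longleftrightarrow> (\<forall>j<m. \<forall>k<m. (j, k) \<in> (trans_graph m a l)\<^sup>*)"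

definition aperiodic_ms :: "nat \<Rightarrow> (nat \<Rightarrow> real) \<Rightarrow> (nat \<Rightarrow> real) \<Rightarrow> bool" where
  "aperiodic_ms m a l \<longleftrightarrow>
     (\<exists>N\<ge>1. \<forall>j<m. \<forall>k<m. (j, k) \<in> (trans_graph m a l) ^^ N)"

definition max_inv_set :: "nat \<Rightarrow> (nat \<Rightarrow> real) \<Rightarrow> (nat \<Rightarrow> real) \<Rightarrow> real set" where
  "max_inv_set m a l = {x. \<forall>n. (dbl ^^ n) x \<in> (\<Union>j<m. arc (a j) (l j))}"

definition K_set :: "real \<Rightarrow> real \<Rightarrow> real set" where
  "K_set b \<delta> = {x \<in> circ. \<forall>n. dT ((dbl ^^ n) x) b \<ge> \<delta>}"

end

theory Submission
  imports Defs
begin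

text \<open>
  Cut the circle into the \<open>M = 2^N\<close> dyadic cells \<open>[k/M, (k+1)/M]\<close>, join each cell to the two
  cells covered by its image under the doubling map, and delete the cells containing \<open>b\<close>.
  The orbit of a point of \<open>K_\<delta>\<close> is a walk in this pruned graph, and the Markov subsystem is
  the strongly connected component of a suitable hub cell \<open>h\<close>.  A cell of \<open>K_\<delta>\<close> reaches \<open>h\<close>
  through the point of the cell that lands after \<open>N\<close> steps on a point leading to \<open>h\<close>: it
  shadows the orbit of the \<open>K_\<delta>\<close> point and then approaches its landing point, and both stay
  away from \<open>b\<close>.  Symmetrically \<open>h\<close> reaches every cell of \<open>K_\<delta>\<close>.  For \<open>1/2 < b\<close> the hub is
  the cell of the fixed point \<open>0\<close>; the case \<open>b < 1/2\<close> follows by the symmetry \<open>x \<mapsto> -x\<close>,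
  which commutes with the doubling map; for \<open>b = 0\<close> the hub is the cell of \<open>1/3\<close>, whose
  component also contains the 3-cycle of \<open>1/7\<close>, which gives aperiodicity.  Since \<open>0 < c < 1\<close>,
  \<open>b = 1/2 - c\<close> is never \<open>1/2\<close>.
\<close>

section \<open>The doubling map and the distance on the circle\<close>

lemma frac_two_mult_frac: "frac (2 * frac y) = frac (2 * y)" for y :: real
proof -
  have "2 * frac y = 2 * y + of_int (- 2 * \<lfloor>y\<rfloor>)" by (simp add: frac_def)
  then show ?thesis by (simp only: frac_add_of_int_right)
qed

lemma dbl_frac: "dbl (frac y) = frac (2 * y)"
  by (simp add: dbl_def frac_two_mult_frac)

lemma funpow_dbl_frac: "(dbl ^^ n) (frac x) = frac (2 ^ n * x)"
  by (induction n) (simp_all add: dbl_frac mult.assoc)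

lemma funpow_dbl: "0 \<le> x \<Longrightarrow> x < 1 \<Longrightarrow> (dbl ^^ n) x = frac (2 ^ n * x)"
  using funpow_dbl_frac[of n x] by (simp add: frac_eq)

lemma funpow_dbl_range: "0 \<le> x \<Longrightarrow> x < 1 \<Longrightarrow> 0 \<le> (dbl ^^ n) x \<and> (dbl ^^ n) x < 1"
  by (simp add: funpow_dbl frac_lt_1)

lemma funpow_dbl_zero: "(dbl ^^ n) 0 = 0"
  by (induction n) (simp_all add: dbl_def)

lemma funpow_dbl_frac_neg: "(dbl ^^ n) (frac (- x)) = frac (- (dbl ^^ n) x)"
proof (induction n)
  case (Suc n)
  have "dbl (frac (- y)) = frac (- dbl y)" for y
    unfolding dbl_frac by (simp add: dbl_def frac_neg_frac)
  with Suc show ?case by simp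
qed simp

lemma dT_le: "dT x y \<le> \<bar>x - y - of_int k\<bar>"
proof -
  define d where "d = x - y"
  have d: "of_int \<lfloor>d\<rfloor> \<le> d" "d < of_int \<lfloor>d\<rfloor> + 1" by linarith+
  have "frac d \<le> \<bar>d - of_int k\<bar> \<or> 1 - frac d \<le> \<bar>d - of_int k\<bar>"
  proof (cases "k \<le> \<lfloor>d\<rfloor>")
    case True
    then have "real_of_int k \<le> of_int \<lfloor>d\<rfloor>" by simp
    with d show ?thesis unfolding frac_def by linarith
  next
    case False
    then have "real_of_int \<lfloor>d\<rfloor> + 1 \<le> of_int k" by linarith
    with d show ?thesis unfolding frac_def by linarith
  qed
  then show ?thesis by (auto simp: dT_def d_def)
qed

lemma dT_attained: obtains k :: int where "dT x y = \<bar>x - y - of_int k\<bar>"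
proof -
  define d where "d = x - y"
  have "0 \<le> frac d" "frac d < 1" by (simp_all add: frac_lt_1)
  then have "dT x y = \<bar>d - of_int \<lfloor>d\<rfloor>\<bar> \<or> dT x y = \<bar>d - of_int (\<lfloor>d\<rfloor> + 1)\<bar>"
    by (auto simp: dT_def d_def frac_def min_def)
  then show ?thesis using that unfolding d_def by blast
qed

lemma dT_le_abs: "dT x y \<le> \<bar>x - y\<bar>"
  using dT_le[of x y 0] by simp

lemma dT_sym: "dT x y = dT y x"
proof -
  obtain k j where "dT x y = \<bar>x - y - of_int k\<bar>" "dT y x = \<bar>y - x - of_int j\<bar>"
    by (metis dT_attained)
  with dT_le[of y x "- k"] dT_le[of x y "- j"] show ?thesis by linarith
qed

lemma dT_triangle: "dT x z \<le> dT x y + dT y z"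
proof -
  obtain k j where "dT x y = \<bar>x - y - of_int k\<bar>" "dT y z = \<bar>y - z - of_int j\<bar>"
    by (metis dT_attained)
  with dT_le[of x z "k + j"] show ?thesis by simp
qed

lemma dT_frac_left [simp]: "dT (frac x) y = dT x y"
proof -
  have "frac x - y = (x - y) + of_int (- \<lfloor>x\<rfloor>)" by (simp add: frac_def)
  then show ?thesis by (simp only: dT_def frac_add_of_int_right)
qed

lemma dT_frac_right [simp]: "dT x (frac y) = dT x y"
  by (metis dT_sym dT_frac_left)

lemma dT_neg: "dT (- x) (- y) = dT x y"
proof -
  have le: "dT (- u) (- v) \<le> dT u v" for u v
  proof -
    obtain k where "dT u v = \<bar>u - v - of_int k\<bar>" by (rule dT_attained)
    with dT_le[of "- u" "- v" "- k"] show ?thesis by simp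
  qed
  show ?thesis using le[of x y] le[of "- x" "- y"] by simp
qed

lemma dT_dbl: "dT (dbl x) (dbl y) \<le> 2 * dT x y"
proof -
  obtain k where k: "dT x y = \<bar>x - y - of_int k\<bar>" by (rule dT_attained)
  have "dbl x - dbl y - of_int (2 * k - \<lfloor>2 * x\<rfloor> + \<lfloor>2 * y\<rfloor>) = 2 * (x - y - of_int k)"
    by (simp add: dbl_def frac_def algebra_simps)
  then have "dT (dbl x) (dbl y) \<le> \<bar>2 * (x - y - of_int k)\<bar>"
    by (metis dT_le)
  with k show ?thesis by (simp only: abs_mult)
qed

lemma dT_funpow_dbl: "dT ((dbl ^^ n) x) ((dbl ^^ n) y) \<le> 2 ^ n * dT x y"
proof (induction n)
  case (Suc n)
  have "dT ((dbl ^^ Suc n) x) ((dbl ^^ Suc n) y) \<le> 2 * dT ((dbl ^^ n) x) ((dbl ^^ n) y)"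
    by (simp add: dT_dbl)
  with Suc show ?case by simp
qed simp

lemma dT_unit_interval:
  assumes "0 \<le> x" "x < 1" "0 \<le> y" "y < 1"
  shows "dT x y = min \<bar>x - y\<bar> (1 - \<bar>x - y\<bar>)"
proof (cases "y \<le> x")
  case True
  with assms have "frac (x - y) = x - y" by (simp add: frac_eq)
  with True show ?thesis by (simp add: dT_def)
next
  case False
  with assms have "frac (x - y) = x - y + 1" by (subst frac_unique_iff) simp
  with False show ?thesis by (simp add: dT_def min.commute)
qed

lemma dT_pos: "0 \<le> x \<Longrightarrow> x < 1 \<Longrightarrow> 0 \<le> y \<Longrightarrow> y < 1 \<Longrightarrow> x \<noteq> y \<Longrightarrow> 0 < dT x y"
  using dT_unit_interval[of x y] by auto

lemma dT_lower_of_funpow: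
  assumes "(dbl ^^ s) w = \<tau>" "s < K" "2 ^ K / real M < dT \<tau> ((dbl ^^ s) b)"
  shows "1 / real M < dT w b"
proof -
  have "2 ^ s * (1 / real M) \<le> 2 ^ K / real M"
    using assms(2) by (simp add: divide_right_mono)
  with assms(3) dT_funpow_dbl[of s w b, unfolded assms(1)] have "2 ^ s * (1 / real M) < 2 ^ s * dT w b"
    by linarith
  then show ?thesis using mult_less_cancel_left_pos[of "2 ^ s" "1 / real M" "dT w b"] by simp
qed

lemma dT_funpow_shadow:
  assumes "M = 2 ^ N" "t + j \<le> N" "\<bar>z - x\<bar> < 1 / real M"
  shows "dT ((dbl ^^ t) z) ((dbl ^^ t) x) \<le> 1 / 2 ^ j"
proof -
  have "(2::real) ^ (t + j) \<le> 2 ^ N" using assms(2) by (intro power_increasing) simp_all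
  then have "2 ^ t * (1 / real M) \<le> 1 / 2 ^ j" using assms(1) by (simp add: power_add field_simps)
  moreover have "2 ^ t * \<bar>z - x\<bar> \<le> 2 ^ t * (1 / real M)"
    using assms(3) by (intro mult_left_mono) simp_all
  moreover have "dT ((dbl ^^ t) z) ((dbl ^^ t) x) \<le> 2 ^ t * \<bar>z - x\<bar>"
    by (rule order.trans[OF dT_funpow_dbl]) (simp add: dT_le_abs)
  ultimately show ?thesis by linarith
qed

section \<open>Arcs\<close>

lemma frac_mem_arc: "a \<le> t \<Longrightarrow> t \<le> a + l \<Longrightarrow> frac t \<in> arc a l"
  by (auto simp: arc_def)

lemma frac_mem_arc_open: "a < t \<Longrightarrow> t < a + l \<Longrightarrow> frac t \<in> arc_open a l"
  by (auto simp: arc_open_def)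

lemma frac_diff_of_int: "frac (t - of_int j) = frac t"
  by (metis frac_add_of_int_right diff_add_cancel)

lemma arc_shift: "arc (a + of_int j) l = arc a l"
proof -
  have sub: "arc (a + of_int j) l \<subseteq> arc a l" for a j
  proof
    fix x assume "x \<in> arc (a + of_int j) l"
    then obtain t where "x = frac t" "a + of_int j \<le> t" "t \<le> a + of_int j + l"
      unfolding arc_def by blast
    with frac_mem_arc[of a "t - of_int j" l] show "x \<in> arc a l"
      by (simp add: frac_diff_of_int)
  qed
  show ?thesis
    using sub[of a j] sub[of "a + of_int j" "- j"] by simp
qed

lemma arc_shift_nat: "arc (a + real n) l = arc a l"
  using arc_shift[of a "int n" l] by simp

lemma arc_open_shift: "arc_open (a + of_int j) l = arc_open a l"
proof -
  have sub: "arc_open (a + of_int j) l \<subseteq> arc_open a l" for a j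
  proof
    fix x assume "x \<in> arc_open (a + of_int j) l"
    then obtain t where "x = frac t" "a + of_int j < t" "t < a + of_int j + l"
      unfolding arc_open_def by blast
    with frac_mem_arc_open[of a "t - of_int j" l] show "x \<in> arc_open a l"
      by (simp add: frac_diff_of_int)
  qed
  show ?thesis
    using sub[of a j] sub[of "a + of_int j" "- j"] by simp
qed

lemma arc_open_shift_nat: "arc_open (a + real n) l = arc_open a l"
  using arc_open_shift[of a "int n" l] by simp

lemma arc_mono: "a \<le> a' \<Longrightarrow> a' + l' \<le> a + l \<Longrightarrow> arc a' l' \<subseteq> arc a l"
  unfolding arc_def by fastforce

lemma arc_open_eq_interval:
  assumes "0 \<le> a" "a + l \<le> 1"
  shows "arc_open a l = {a<..<a + l}"
proof -
  have "frac t = t" if "a < t" "t < a + l" for t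
    using assms that by (simp add: frac_eq)
  then show ?thesis
    unfolding arc_open_def by (auto intro!: exI[of _ t for t])
qed

lemma dbl_image_arc: "dbl ` arc a l = arc (2 * a) (2 * l)"
proof
  show "dbl ` arc a l \<subseteq> arc (2 * a) (2 * l)"
    by (auto simp: arc_def dbl_frac)
  show "arc (2 * a) (2 * l) \<subseteq> dbl ` arc a l"
  proof
    fix x assume "x \<in> arc (2 * a) (2 * l)"
    then obtain u where u: "x = frac u" "2 * a \<le> u" "u \<le> 2 * a + 2 * l" by (auto simp: arc_def)
    then have "x = dbl (frac (u / 2))" "frac (u / 2) \<in> arc a l"
      by (auto simp: dbl_frac intro: frac_mem_arc)
    then show "x \<in> dbl ` arc a l" by blast
  qed
qed

lemma dbl_image_arc_open: "dbl ` arc_open a l = arc_open (2 * a) (2 * l)"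
proof
  show "dbl ` arc_open a l \<subseteq> arc_open (2 * a) (2 * l)"
    by (auto simp: arc_open_def dbl_frac)
  show "arc_open (2 * a) (2 * l) \<subseteq> dbl ` arc_open a l"
  proof
    fix x assume "x \<in> arc_open (2 * a) (2 * l)"
    then obtain u where u: "x = frac u" "2 * a < u" "u < 2 * a + 2 * l" by (auto simp: arc_open_def)
    then have "x = dbl (frac (u / 2))" "frac (u / 2) \<in> arc_open a l"
      by (auto simp: dbl_frac intro: frac_mem_arc_open)
    then show "x \<in> dbl ` arc_open a l" by blast
  qed
qed

lemma frac_neg_mem_arc_iff: "frac (- x) \<in> arc (- a - l) l \<longleftrightarrow> frac x \<in> arc a l"
proof -
  have imp: "frac (- y) \<in> arc (- c - l) l" if y: "frac y \<in> arc c l" for y c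
  proof -
    obtain t where t: "frac y = frac t" "c \<le> t" "t \<le> c + l"
      using y unfolding arc_def by blast
    then have "frac (- y) = frac (- t)" by (simp add: frac_neg_eq_iff)
    with t show ?thesis by (auto intro: frac_mem_arc)
  qed
  show ?thesis using imp[of x a] imp[of "- x" "- a - l"] by auto
qed

lemma arc_diameter: "u \<in> arc a l \<Longrightarrow> v \<in> arc a l \<Longrightarrow> dT u v \<le> l"
proof -
  assume "u \<in> arc a l" "v \<in> arc a l"
  then obtain s t where "u = frac s" "v = frac t" "a \<le> s" "s \<le> a + l" "a \<le> t" "t \<le> a + l"
    by (auto simp: arc_def)
  with dT_le_abs[of s t] show "dT u v \<le> l" by simp
qed

lemma inj_on_dbl_arc: "l < 1 / 2 \<Longrightarrow> inj_on dbl (arc a l)"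
proof
  fix x y assume l: "l < 1 / 2" and "x \<in> arc a l" "y \<in> arc a l" and eq: "dbl x = dbl y"
  then obtain s t where st: "x = frac s" "y = frac t" "a \<le> s" "s \<le> a + l" "a \<le> t" "t \<le> a + l"
    by (auto simp: arc_def)
  with eq obtain k where k: "2 * s = 2 * t + of_int k"
    by (auto simp: dbl_frac elim: frac_eqE)
  with st l have "\<bar>real_of_int k\<bar> < 1" by linarith
  then have "k = 0" by linarith
  with k st show "x = y" by simp
qed

section \<open>Dyadic cells\<close>

definition cell :: "nat \<Rightarrow> nat \<Rightarrow> real set" where
  "cell M k = arc (real k / real M) (1 / real M)"

definition cell_index :: "nat \<Rightarrow> real \<Rightarrow> nat" where
  "cell_index M u = nat \<lfloor>real M * u\<rfloor>"

lemma cell_index_bounds: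
  assumes "0 \<le> u"
  shows "real (cell_index M u) \<le> real M * u" "real M * u < real (cell_index M u) + 1"
proof -
  from assms have "real (cell_index M u) = of_int \<lfloor>real M * u\<rfloor>"
    by (simp add: cell_index_def)
  then show "real (cell_index M u) \<le> real M * u" "real M * u < real (cell_index M u) + 1"
    by linarith+
qed

lemma cell_index_less:
  assumes "0 \<le> u" "u < 1" "0 < M"
  shows "cell_index M u < M"
proof -
  have "real M * u < real M" using assms by simp
  with cell_index_bounds(1)[OF assms(1), of M] show ?thesis by simp
qed

lemma mem_cell_index: "0 \<le> u \<Longrightarrow> u < 1 \<Longrightarrow> 0 < M \<Longrightarrow> u \<in> cell M (cell_index M u)"
  using cell_index_bounds[of u M] frac_mem_arc[of "real (cell_index M u) / real M" u "1 / real M"]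
  by (simp add: cell_def frac_eq field_simps)

lemma cell_index_eqI: "real k \<le> real M * u \<Longrightarrow> real M * u < real k + 1 \<Longrightarrow> cell_index M u = k"
  using floor_eq_iff[of "real M * u" "int k"] by (simp add: cell_index_def)

lemma cell_index_eq_imp_dist:
  assumes "0 \<le> u" "0 \<le> v" "0 < M" "cell_index M u = cell_index M v"
  shows "\<bar>u - v\<bar> < 1 / real M"
proof -
  have "\<bar>real M * u - real M * v\<bar> < 1"
    using cell_index_bounds[OF assms(1), of M] cell_index_bounds[OF assms(2), of M] assms(4)
    by linarith
  then have "real M * \<bar>u - v\<bar> < 1"
    by (simp add: abs_mult flip: right_diff_distrib)
  with assms(3) show ?thesis
    by (simp add: field_simps)
qed

lemma dyadic_preimage:
  assumes "M = 2 ^ N" "c < M" "0 \<le> y" "y < 1"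
  defines "z \<equiv> (real c + y) / real M"
  shows "0 \<le> z" "z < 1" "cell_index M z = c" "(dbl ^^ N) z = y"
proof -
  have "c + 1 \<le> M" using assms(2) by simp
  then have M: "real M = 2 ^ N" "real c + 1 \<le> real M"
    using assms(1) by (simp, metis of_nat_1 of_nat_add of_nat_le_iff)
  have Mz: "real M * z = real c + y" using M by (simp add: z_def)
  show "0 \<le> z" "z < 1" using assms(3,4) M by (simp_all add: z_def field_simps)
  show "cell_index M z = c" using Mz assms(3,4) by (intro cell_index_eqI) simp_all
  have "(dbl ^^ N) z = frac (real c + y)"
    using funpow_dbl[OF \<open>0 \<le> z\<close> \<open>z < 1\<close>] Mz M by simp
  also have "\<dots> = y"
    using frac_add_of_int_left[of "int c" y] assms(3,4) by (simp add: frac_eq)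
  finally show "(dbl ^^ N) z = y" .
qed

lemma dyadic_preimage_near:
  assumes "M = 2 ^ N" "0 \<le> p" "p < 1" "0 \<le> y" "y < 1"
  obtains z where "0 \<le> z" "z < 1" "cell_index M z = cell_index M p" "(dbl ^^ N) z = y"
    "\<bar>z - p\<bar> < 1 / real M"
proof -
  have "0 < M" using assms(1) by simp
  note z = dyadic_preimage[OF assms(1) cell_index_less[OF assms(2,3) this] assms(4,5)]
  show ?thesis
    using that z cell_index_eq_imp_dist[OF z(1) assms(2) \<open>0 < M\<close> z(3)] by blast
qed

lemma frac_neg_mem_cell_iff:
  assumes "k < M"
  shows "frac (- x) \<in> cell M (M - 1 - k) \<longleftrightarrow> frac x \<in> cell M k"
proof -
  have "real (M - 1 - k) / real M = - (real k / real M) - 1 / real M + of_int 1"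
    using assms by (simp add: of_nat_diff field_simps)
  then have "cell M (M - 1 - k) = arc (- (real k / real M) - 1 / real M) (1 / real M)"
    by (simp only: cell_def arc_shift)
  then show ?thesis by (simp add: cell_def frac_neg_mem_arc_iff)
qed

lemma cell_mod: "0 < M \<Longrightarrow> cell M (j mod M) = arc (real j / real M) (1 / real M)"
proof -
  assume "0 < M"
  then have "real j / real M = real (j mod M) / real M + of_int (int (j div M))"
    by (simp add: field_simps flip: of_nat_mult of_nat_add)
  then show ?thesis by (simp add: cell_def arc_shift_nat)
qed

lemma cell_interiors_disjoint:
  assumes "k < M" "l < M" "k \<noteq> l"
  shows "arc_open (real k / real M) (1 / real M) \<inter> arc_open (real l / real M) (1 / real M) = {}"
proof -
  have interval: "arc_open (real i / real M) (1 / real M) = {real i / real M<..<(real i + 1) / real M}"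
    if "i < M" for i
    using that by (subst arc_open_eq_interval) (simp_all add: field_simps)
  have "real k + 1 \<le> real l \<or> real l + 1 \<le> real k" using assms(3) by linarith
  then have "(real k + 1) / real M \<le> real l / real M \<or> (real l + 1) / real M \<le> real k / real M"
    by (auto intro: divide_right_mono)
  then show ?thesis unfolding interval[OF assms(1)] interval[OF assms(2)] by auto
qed

definition doubling_graph :: "nat \<Rightarrow> (nat \<times> nat) set" where
  "doubling_graph M = {(k, l). k < M \<and> l < M \<and> (l = 2 * k mod M \<or> l = (2 * k + 1) mod M)}"

lemma doubling_graph_iff:
  "(k, l) \<in> doubling_graph M \<longleftrightarrow> k < M \<and> l < M \<and> (\<exists>r\<le>1. l = (2 * k + r) mod M)"
proof -
  have "(\<exists>r\<le>1. P r) \<longleftrightarrow> P 0 \<or> P 1" for P :: "nat \<Rightarrow> bool"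
    using le_Suc_eq by auto
  then show ?thesis by (auto simp: doubling_graph_def)
qed

lemma cell_index_dbl:
  assumes u: "0 \<le> u" "u < 1" and "0 < M"
  shows "(cell_index M u, cell_index M (dbl u)) \<in> doubling_graph M"
proof -
  define k l e where "k = cell_index M u" and "l = cell_index M (dbl u)" and "e = \<lfloor>2 * u\<rfloor>"
  have "0 \<le> dbl u" "dbl u < 1" by (simp_all add: dbl_def frac_lt_1)
  with u \<open>0 < M\<close> have kl: "k < M" "l < M"
    by (simp_all add: k_def l_def cell_index_less)
  have "0 \<le> e" using u by (simp add: e_def)
  have "real k \<le> real M * u" "real M * u < real k + 1"
    using cell_index_bounds[OF u(1)] by (simp_all add: k_def)
  then have "\<lfloor>2 * (real M * u)\<rfloor> = int (2 * k) \<or> \<lfloor>2 * (real M * u)\<rfloor> = int (2 * k + 1)"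
    by (simp add: floor_eq_iff) linarith
  then obtain r :: nat where r: "r \<le> 1" "\<lfloor>2 * (real M * u)\<rfloor> = int (2 * k + r)"
    by (metis add_0_right le_refl zero_le_one)
  have "real M * dbl u = 2 * (real M * u) - of_int (int M * e)"
    by (simp add: dbl_def frac_def e_def algebra_simps)
  then have "\<lfloor>real M * dbl u\<rfloor> = \<lfloor>2 * (real M * u)\<rfloor> - int M * e"
    by (simp only: floor_diff_of_int)
  moreover have "int l = \<lfloor>real M * dbl u\<rfloor>"
    using \<open>0 \<le> dbl u\<close> by (simp add: l_def cell_index_def)
  ultimately have "int l = \<lfloor>2 * (real M * u)\<rfloor> - int M * e" by simp
  with r \<open>0 \<le> e\<close> have "2 * k + r = l + M * nat e"
    by (simp add: nat_mult_distrib flip: nat_int_add)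
  then have "l = (2 * k + r) mod M"
    using kl by simp
  with kl r show ?thesis
    unfolding doubling_graph_iff k_def l_def by blast
qed

lemma doubling_graph_reflect:
  assumes "(k, l) \<in> doubling_graph M"
  shows "(M - 1 - k, M - 1 - l) \<in> doubling_graph M"
proof -
  obtain r where kl: "k < M" "l < M" and r: "r \<le> 1" "l = (2 * k + r) mod M"
    using assms by (auto simp: doubling_graph_iff)
  define q where "q = (2 * k + r) div M"
  have div: "2 * k + r = q * M + l" by (simp add: q_def r(2))
  have "q < 2"
    using kl r(1) by (simp add: q_def less_mult_imp_div_less)
  then have "2 * (M - 1 - k) + (1 - r) = (M - 1 - l) + (1 - q) * M"
    using div kl r(1) by (cases q) auto
  then have "(2 * (M - 1 - k) + (1 - r)) mod M = (M - 1 - l) mod M"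
    by (simp only: mod_mult_self1)
  then have "M - 1 - l = (2 * (M - 1 - k) + (1 - r)) mod M"
    using kl by simp
  moreover have "M - 1 - k < M" "M - 1 - l < M" using kl by auto
  ultimately show ?thesis
    unfolding doubling_graph_iff by (meson diff_le_self)
qed

lemma cell_transition:
  assumes "(k, l) \<in> doubling_graph M"
  shows "cell M l \<subseteq> dbl ` cell M k"
proof -
  obtain r where r: "r \<le> 1" "l = (2 * k + r) mod M" and "k < M"
    using assms by (auto simp: doubling_graph_iff)
  then have "cell M l = arc (real (2 * k + r) / real M) (1 / real M)"
    by (simp add: cell_mod)
  also have "\<dots> \<subseteq> arc (2 * (real k / real M)) (2 * (1 / real M))"
  proof (rule arc_mono)
    have "real r / real M \<le> 1 / real M" using r(1) by (simp add: divide_right_mono)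
    moreover have "real (2 * k + r) / real M = 2 * (real k / real M) + real r / real M"
      by (simp add: add_divide_distrib)
    ultimately show "2 * (real k / real M) \<le> real (2 * k + r) / real M"
      "real (2 * k + r) / real M + 1 / real M \<le> 2 * (real k / real M) + 2 * (1 / real M)"
      by simp_all
  qed
  finally show ?thesis by (simp add: cell_def dbl_image_arc)
qed

lemma cell_no_transition:
  assumes "even M" "k < M" "l < M" "(k, l) \<notin> doubling_graph M"
  shows "dbl ` arc_open (real k / real M) (1 / real M) \<inter> arc_open (real l / real M) (1 / real M) = {}"
proof -
  define k2 where "k2 = 2 * k mod M"
  obtain H where H: "M = 2 * H" using assms(1) by blast
  have "k2 = 2 * (k mod H)" by (simp add: k2_def H)
  moreover have "k mod H < H" using assms(2) H by simp
  ultimately have "k2 + 2 \<le> M" using H by linarith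
  then have k2: "k2 + 2 \<le> M" "(2 * k + 1) mod M = k2 + 1"
    by (simp_all add: k2_def mod_Suc)
  have "2 * (real k / real M) = real k2 / real M + real (2 * k div M)"
    using assms(2) by (simp add: k2_def field_simps flip: of_nat_mult of_nat_add)
  then have "dbl ` arc_open (real k / real M) (1 / real M) = arc_open (real k2 / real M) (2 / real M)"
    by (simp add: dbl_image_arc_open arc_open_shift_nat)
  also have "\<dots> = {real k2 / real M<..<(real k2 + 2) / real M}"
    using k2(1) by (subst arc_open_eq_interval) (simp_all add: field_simps)
  finally have image: "dbl ` arc_open (real k / real M) (1 / real M)
      = {real k2 / real M<..<(real k2 + 2) / real M}" .
  have "arc_open (real l / real M) (1 / real M) = {real l / real M<..<(real l + 1) / real M}"
    using assms(3) by (subst arc_open_eq_interval) (simp_all add: field_simps)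
  moreover have "real l + 1 \<le> real k2 \<or> real k2 + 2 \<le> real l"
    using assms(2-4) k2 by (auto simp: doubling_graph_def k2_def)
  then have "(real l + 1) / real M \<le> real k2 / real M \<or> (real k2 + 2) / real M \<le> real l / real M"
    by (auto intro: divide_right_mono)
  ultimately show ?thesis
    unfolding image by auto
qed

section \<open>Walks\<close>

lemma relpow_trans: "(a, b) \<in> R ^^ m \<Longrightarrow> (b, c) \<in> R ^^ n \<Longrightarrow> (a, c) \<in> R ^^ (m + n)"
  by (auto simp: relpow_add)

lemma relpow_of_loop: "(h, h) \<in> R \<Longrightarrow> (h, h) \<in> R ^^ n"
  by (induction n) (auto intro: relpow_Suc_I)

lemma relpow_map:
  assumes edge: "\<And>u v. (u, v) \<in> R \<Longrightarrow> (f u, f v) \<in> Q"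
  shows "(u, v) \<in> R ^^ n \<Longrightarrow> (f u, f v) \<in> Q ^^ n"
proof (induction n arbitrary: v)
  case (Suc n)
  from Suc.prems obtain w where "(u, w) \<in> R ^^ n" "(w, v) \<in> R" by (meson relpow_Suc_E)
  with Suc.IH edge show ?case by (blast intro: relpow_Suc_I)
qed simp

lemma rtrancl_map:
  assumes "\<And>u v. (u, v) \<in> R \<Longrightarrow> (f u, f v) \<in> Q" "(u, v) \<in> R\<^sup>*"
  shows "(f u, f v) \<in> Q\<^sup>*"
  using relpow_map[OF assms(1)] assms(2) by (meson relpow_imp_rtrancl rtrancl_imp_relpow)

lemma relpow_Restr_scc:
  assumes "(u, v) \<in> G ^^ n" "(h, u) \<in> G\<^sup>*" "(v, h) \<in> G\<^sup>*"
  shows "(u, v) \<in> Restr G {w. (h, w) \<in> G\<^sup>* \<and> (w, h) \<in> G\<^sup>*} ^^ n"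
  using assms
proof (induction n arbitrary: u)
  case (Suc n)
  then obtain w where w: "(u, w) \<in> G" "(w, v) \<in> G ^^ n" by (blast dest: relpow_Suc_D2)
  have "(w, h) \<in> G\<^sup>*" using w(2) Suc.prems(3) by (metis relpow_imp_rtrancl rtrancl_trans)
  moreover have "(h, w) \<in> G\<^sup>*" using Suc.prems(2) w(1) by simp
  moreover have "(u, h) \<in> G\<^sup>*" using w(1) calculation(1) by (rule converse_rtrancl_into_rtrancl)
  ultimately show ?case
    using Suc.IH[OF w(2)] Suc.prems(2,3) w(1) by (blast intro: relpow_Suc_I2)
qed simp

lemma relpow_uniform_length:
  assumes "finite S"
    and to_hub: "\<And>u. u \<in> S \<Longrightarrow> (u, h) \<in> R\<^sup>*" and from_hub: "\<And>u. u \<in> S \<Longrightarrow> (h, u) \<in> R\<^sup>*"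
    and loops: "\<And>n. n0 \<le> n \<Longrightarrow> (h, h) \<in> R ^^ n"
  shows "\<exists>P\<ge>1. \<forall>u\<in>S. \<forall>v\<in>S. (u, v) \<in> R ^^ P"
proof -
  have "\<forall>u\<in>S. \<exists>k. (u, h) \<in> R ^^ k" "\<forall>u\<in>S. \<exists>k. (h, u) \<in> R ^^ k"
    using to_hub from_hub by (meson rtrancl_imp_relpow)+
  then obtain a c where a: "\<And>u. u \<in> S \<Longrightarrow> (u, h) \<in> R ^^ a u"
    and c: "\<And>u. u \<in> S \<Longrightarrow> (h, u) \<in> R ^^ c u"
    by metis
  define A C where "A = Max (a ` S)" and "C = Max (c ` S)"
  define P where "P = A + C + n0 + 1"
  have "(u, v) \<in> R ^^ P" if "u \<in> S" "v \<in> S" for u v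
  proof -
    have "a u \<le> A" "c v \<le> C" using assms(1) that by (simp_all add: A_def C_def)
    then have "(h, h) \<in> R ^^ (P - a u - c v)" "a u + (P - a u - c v) + c v = P"
      using loops by (simp_all add: P_def)
    then show ?thesis
      using relpow_trans[OF relpow_trans[OF a[OF that(1)]] c[OF that(2)]] by metis
  qed
  then show ?thesis by (intro exI[of _ P]) (simp add: P_def)
qed

lemma eventually_closed_walks:
  assumes "(h, h) \<in> R ^^ 2" "(u, u) \<in> R ^^ 3" "(h, u) \<in> R\<^sup>*" "(u, h) \<in> R\<^sup>*"
  shows "\<exists>n0. \<forall>n\<ge>n0. (h, h) \<in> R ^^ n"
proof -
  obtain p q where "(h, u) \<in> R ^^ p" "(u, h) \<in> R ^^ q"
    using assms(3,4) by (metis rtrancl_imp_relpow)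
  then have "(h, h) \<in> R ^^ (p + q)" "(h, h) \<in> R ^^ (p + 3 + q)"
    using assms(2) by (blast intro: relpow_trans)+
  moreover have "odd (p + q) \<or> odd (p + 3 + q)" by auto
  ultimately obtain r where r: "odd r" "(h, h) \<in> R ^^ r"
    by blast
  have even: "(h, h) \<in> R ^^ (2 * j)" for j
    by (induction j) (use assms(1) relpow_trans in \<open>fastforce+\<close>)
  have "(h, h) \<in> R ^^ n" if "r \<le> n" for n
  proof (cases "even n")
    case True
    with even show ?thesis by (metis evenE)
  next
    case False
    with r(1) that have "even (n - r)" by simp
    then obtain j where "n - r = 2 * j" by (rule evenE)
    with that have "n = r + 2 * j" by simp
    with r(2) even show ?thesis by (blast intro: relpow_trans)
  qed
  then show ?thesis by blast
qed

lemma relpow_pullback: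
  assumes "bij_betw s A S" "R \<subseteq> S \<times> S"
    and edge: "\<And>j k. j \<in> A \<Longrightarrow> k \<in> A \<Longrightarrow> (s j, s k) \<in> R \<Longrightarrow> (j, k) \<in> Q"
  shows "j \<in> A \<Longrightarrow> k \<in> A \<Longrightarrow> (s j, s k) \<in> R ^^ n \<Longrightarrow> (j, k) \<in> Q ^^ n"
proof (induction n arbitrary: k)
  case 0
  with assms(1) show ?case by (auto simp: bij_betw_def inj_on_eq_iff)
next
  case (Suc n)
  then obtain w where w: "(s j, w) \<in> R ^^ n" "(w, s k) \<in> R" by (blast elim: relpow_Suc_E)
  then obtain i where "i \<in> A" "w = s i"
    using assms(1,2) by (auto simp: bij_betw_def)
  with Suc w edge show ?case by (blast intro: relpow_Suc_I)
qed

section \<open>The pruned graph\<close>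

definition bad_cells :: "nat \<Rightarrow> real \<Rightarrow> nat set" where
  "bad_cells M b = {k. k < M \<and> b \<in> cell M k}"

definition pruned_graph :: "nat \<Rightarrow> real \<Rightarrow> (nat \<times> nat) set" where
  "pruned_graph M b = {(k, l) \<in> doubling_graph M. k \<notin> bad_cells M b \<and> l \<notin> bad_cells M b}"

lemma cell_index_not_bad:
  assumes "0 \<le> u" "u < 1" "0 < M" "1 / real M < dT u b"
  shows "cell_index M u \<notin> bad_cells M b"
proof
  assume "cell_index M u \<in> bad_cells M b"
  then have "dT u b \<le> 1 / real M"
    using mem_cell_index[OF assms(1-3)] by (auto simp: bad_cells_def cell_def intro: arc_diameter)
  with assms(4) show False by simp
qed

lemma bad_cells_reflect:
  assumes "0 \<le> b" "b < 1" "k < M"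
  shows "M - 1 - k \<in> bad_cells M (frac (- b)) \<longleftrightarrow> k \<in> bad_cells M b"
  using frac_neg_mem_cell_iff[OF assms(3), of b] assms by (simp add: bad_cells_def frac_eq)

lemma pruned_graph_reflect:
  assumes "0 \<le> b" "b < 1" "(k, l) \<in> pruned_graph M b"
  shows "(M - 1 - k, M - 1 - l) \<in> pruned_graph M (frac (- b))"
  using assms doubling_graph_reflect[of k l M] bad_cells_reflect[OF assms(1,2), of k M]
    bad_cells_reflect[OF assms(1,2), of l M]
  by (auto simp: pruned_graph_def doubling_graph_def)

lemma pruned_graph_subset: "pruned_graph M b \<subseteq> doubling_graph M"
  by (auto simp: pruned_graph_def)

lemma pruned_graph_rtrancl_less:
  assumes "(k, h) \<in> (pruned_graph M b)\<^sup>*" "h < M"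
  shows "k < M"
  using assms by (cases rule: converse_rtranclE) (auto simp: pruned_graph_def doubling_graph_def)

lemma orbit_path:
  assumes "0 < M" "0 \<le> z" "z < 1"
    and far: "\<And>t. t \<le> n \<Longrightarrow> 1 / real M < dT ((dbl ^^ t) z) b"
  shows "(cell_index M z, cell_index M ((dbl ^^ n) z)) \<in> pruned_graph M b ^^ n"
  using far
proof (induction n)
  case (Suc n)
  define u where "u = (dbl ^^ n) z"
  have u: "0 \<le> u" "u < 1" "0 \<le> dbl u" "dbl u < 1"
    using funpow_dbl_range[OF assms(2,3), of n] funpow_dbl_range[OF assms(2,3), of "Suc n"]
    by (simp_all add: u_def)
  have "cell_index M u \<notin> bad_cells M b" "cell_index M (dbl u) \<notin> bad_cells M b"
    using cell_index_not_bad[OF u(1,2) assms(1)] cell_index_not_bad[OF u(3,4) assms(1)]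
      Suc.prems[of n] Suc.prems[of "Suc n"] by (simp_all add: u_def)
  with cell_index_dbl[OF u(1,2) assms(1)]
  have "(cell_index M u, cell_index M (dbl u)) \<in> pruned_graph M b"
    by (simp add: pruned_graph_def)
  with Suc show ?case by (auto simp: u_def intro: relpow_Suc_I)
qed simp

(* The point z of the cell of x with T^N z = \<tau> shadows the orbit of x for N - K steps;
   afterwards it lands on \<tau> within K steps, so the junction condition keeps it away from b. *)
lemma forward_path:
  assumes M: "M = 2 ^ N" and "K \<le> N"
    and x: "0 \<le> x" "x < 1" "\<And>n. d \<le> dT ((dbl ^^ n) x) b"
    and d: "1 / 2 ^ K \<le> d / 2" "1 / real M < d / 2"
    and \<tau>: "0 \<le> \<tau>" "\<tau> < 1"
    and junction: "\<And>s. s < K \<Longrightarrow> 2 ^ K / real M < dT \<tau> ((dbl ^^ s) b)"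
    and orbit: "\<And>t. t \<le> n \<Longrightarrow> 1 / real M < dT ((dbl ^^ t) \<tau>) b"
  shows "(cell_index M x, cell_index M ((dbl ^^ n) \<tau>)) \<in> (pruned_graph M b)\<^sup>*"
proof -
  have "0 < M" using M by simp
  obtain z where z: "0 \<le> z" "z < 1" "cell_index M z = cell_index M x" "(dbl ^^ N) z = \<tau>"
    "\<bar>z - x\<bar> < 1 / real M"
    using dyadic_preimage_near[OF M x(1,2) \<tau>] .
  have "1 / real M < dT ((dbl ^^ t) z) b" if "t \<le> N + n" for t
  proof (cases "t + K \<le> N")
    case True
    with dT_funpow_shadow[OF M True z(5)] x(3)[of t] d dT_triangle[of "(dbl ^^ t) x" b "(dbl ^^ t) z"]
      dT_sym[of "(dbl ^^ t) x" "(dbl ^^ t) z"]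
    show ?thesis by linarith
  next
    case False
    show ?thesis
    proof (cases "t \<le> N")
      case True
      then have "(dbl ^^ (N - t)) ((dbl ^^ t) z) = \<tau>"
        using z(4) by (simp flip: funpow_add[THEN fun_cong, unfolded comp_def])
      moreover have "N - t < K" using False True by arith
      ultimately show ?thesis using junction by (blast intro: dT_lower_of_funpow)
    next
      case False
      then have "(dbl ^^ t) z = (dbl ^^ (t - N)) \<tau>"
        using z(4) by (metis funpow_add le_add_diff_inverse2 nat_le_linear o_apply)
      with orbit[of "t - N"] that show ?thesis by simp
    qed
  qed
  then have "(cell_index M z, cell_index M ((dbl ^^ (N + n)) z)) \<in> pruned_graph M b ^^ (N + n)"
    by (rule orbit_path[OF \<open>0 < M\<close> z(1,2)])
  moreover have "(dbl ^^ (N + n)) z = (dbl ^^ n) \<tau>"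
    using z(4) by (metis add.commute comp_apply funpow_add)
  ultimately show ?thesis
    using z(3) by (metis relpow_imp_rtrancl)
qed

lemma backward_path:
  assumes M: "M = 2 ^ N" and "c < M" "0 \<le> y" "y < 1"
    and far: "\<And>t. t < N \<Longrightarrow> 1 / real M < dT ((dbl ^^ t) ((real c + y) / real M)) b"
    and "1 / real M < dT y b"
  shows "(c, cell_index M y) \<in> (pruned_graph M b)\<^sup>*"
proof -
  note z = dyadic_preimage[OF M assms(2-4)]
  have "1 / real M < dT ((dbl ^^ t) ((real c + y) / real M)) b" if "t \<le> N" for t
    using far[of t] that z(4) assms(6) by (cases "t = N") simp_all
  then have "(cell_index M ((real c + y) / real M), cell_index M ((dbl ^^ N) ((real c + y) / real M)))
      \<in> pruned_graph M b ^^ N"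
    using M by (intro orbit_path z(1,2)) simp_all
  then show ?thesis
    unfolding z(3,4) by (rule relpow_imp_rtrancl)
qed

lemma backward_path_zero:
  assumes M: "M = 2 ^ N" "4 \<le> N"
    and p: "0 \<le> p" "p < 1" "\<And>n. 1 / 3 \<le> dT ((dbl ^^ n) p) 0"
    and y: "0 \<le> y" "y < 1" "4 / real M < dT y 0"
  shows "(cell_index M p, cell_index M y) \<in> (pruned_graph M 0)\<^sup>*"
proof -
  have "0 < M" using M by simp
  have "(2::real) ^ 4 \<le> 2 ^ N" using M(2) by (rule power_increasing) simp
  then have "1 / real M \<le> 1 / 16" using M(1) by (simp add: field_simps)
  obtain z where z: "0 \<le> z" "z < 1" "cell_index M z = cell_index M p" "(dbl ^^ N) z = y"
    "\<bar>z - p\<bar> < 1 / real M"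
    using dyadic_preimage_near[OF M(1) p(1,2) y(1,2)] .
  have "1 / real M < dT ((dbl ^^ t) z) 0" if "t \<le> N" for t
  proof (cases "t + 2 \<le> N")
    case True
    with dT_funpow_shadow[OF M(1) True z(5)] p(3)[of t] \<open>1 / real M \<le> 1 / 16\<close>
      dT_triangle[of "(dbl ^^ t) p" 0 "(dbl ^^ t) z"] dT_sym[of "(dbl ^^ t) p" "(dbl ^^ t) z"]
    show ?thesis by simp
  next
    case False
    then have "(dbl ^^ (N - t)) ((dbl ^^ t) z) = y" "N - t < 2"
      using z(4) that by (simp_all flip: funpow_add[THEN fun_cong, unfolded comp_def])
    moreover have "(2::real) ^ 2 / real M < dT y ((dbl ^^ (N - t)) 0)"
      using y(3) by (simp add: funpow_dbl_zero)
    ultimately show ?thesis by (rule dT_lower_of_funpow)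
  qed
  then have "(cell_index M z, cell_index M ((dbl ^^ N) z)) \<in> pruned_graph M 0 ^^ N"
    by (rule orbit_path[OF \<open>0 < M\<close> z(1,2)])
  then show ?thesis
    using z(3,4) by (simp add: relpow_imp_rtrancl)
qed

section \<open>Hub cells\<close>

definition hub_cell :: "nat \<Rightarrow> real \<Rightarrow> real \<Rightarrow> nat \<Rightarrow> bool" where
  "hub_cell M b d h \<longleftrightarrow> h < M \<and>
     (\<forall>y. 0 \<le> y \<and> y < 1 \<and> (\<forall>n. d \<le> dT ((dbl ^^ n) y) b) \<longrightarrow>
        (\<exists>k. y \<in> cell M k \<and>
          (k, h) \<in> (pruned_graph M b)\<^sup>* \<and> (h, k) \<in> (pruned_graph M b)\<^sup>*)) \<and>
     (\<exists>n0. \<forall>n\<ge>n0. (h, h) \<in> pruned_graph M b ^^ n)"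

lemma hub_cellI:
  assumes "h < M"
    and paths: "\<And>y. 0 \<le> y \<Longrightarrow> y < 1 \<Longrightarrow> (\<And>n. d \<le> dT ((dbl ^^ n) y) b) \<Longrightarrow>
      (cell_index M y, h) \<in> (pruned_graph M b)\<^sup>* \<and> (h, cell_index M y) \<in> (pruned_graph M b)\<^sup>*"
    and "\<And>n. n0 \<le> n \<Longrightarrow> (h, h) \<in> pruned_graph M b ^^ n"
  shows "hub_cell M b d h"
  unfolding hub_cell_def
proof (intro conjI allI impI)
  fix y assume "0 \<le> y \<and> y < 1 \<and> (\<forall>n. d \<le> dT ((dbl ^^ n) y) b)"
  with paths[of y] mem_cell_index[of y M] \<open>h < M\<close>
  show "\<exists>k. y \<in> cell M k \<and> (k, h) \<in> (pruned_graph M b)\<^sup>* \<and> (h, k) \<in> (pruned_graph M b)\<^sup>*"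
    by auto
qed (use assms in blast)+

lemma hub_cell_reflect:
  assumes "0 \<le> b" "b < 1" "hub_cell M b d h"
  shows "hub_cell M (frac (- b)) d (M - 1 - h)"
proof -
  let ?G = "pruned_graph M b" and ?G' = "pruned_graph M (frac (- b))"
  have edge: "(k, l) \<in> ?G \<Longrightarrow> (M - 1 - k, M - 1 - l) \<in> ?G'" for k l
    by (rule pruned_graph_reflect[OF assms(1,2)])
  obtain n0 where "h < M" and loops: "\<And>n. n0 \<le> n \<Longrightarrow> (h, h) \<in> ?G ^^ n"
    using assms(3) by (auto simp: hub_cell_def)
  have "\<exists>k. y \<in> cell M k \<and> (k, M - 1 - h) \<in> ?G'\<^sup>* \<and> (M - 1 - h, k) \<in> ?G'\<^sup>*"
    if y: "0 \<le> y" "y < 1" "\<forall>n. d \<le> dT ((dbl ^^ n) y) (frac (- b))" for y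
  proof -
    define y' where "y' = frac (- y)"
    have "dT ((dbl ^^ n) y') b = dT ((dbl ^^ n) y) (frac (- b))" for n
      using dT_neg[of "(dbl ^^ n) y" "- b"] by (simp add: y'_def funpow_dbl_frac_neg)
    moreover have "0 \<le> y'" "y' < 1" by (simp_all add: y'_def frac_lt_1)
    ultimately obtain k where k: "y' \<in> cell M k" "(k, h) \<in> ?G\<^sup>*" "(h, k) \<in> ?G\<^sup>*"
      using assms(3) y(3) by (auto simp: hub_cell_def)
    have "k < M" using pruned_graph_rtrancl_less[OF k(2) \<open>h < M\<close>] .
    have "y \<in> cell M (M - 1 - k)"
      using frac_neg_mem_cell_iff[OF \<open>k < M\<close>, of y'] k(1) \<open>0 \<le> y'\<close> \<open>y' < 1\<close> y(1,2)
      by (simp add: y'_def frac_eq frac_neg_frac)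
    moreover have "(M - 1 - k, M - 1 - h) \<in> ?G'\<^sup>*" "(M - 1 - h, M - 1 - k) \<in> ?G'\<^sup>*"
      using rtrancl_map[OF edge k(2)] rtrancl_map[OF edge k(3)] by simp_all
    ultimately show ?thesis by blast
  qed
  moreover have "M - 1 - h < M" using \<open>h < M\<close> by simp
  moreover have "(M - 1 - h, M - 1 - h) \<in> ?G' ^^ n" if "n0 \<le> n" for n
    using relpow_map[OF edge loops[OF that]] .
  ultimately show ?thesis unfolding hub_cell_def by blast
qed

(* K is the landing time of forward_path and 2^-N the width of the cells. *)
lemma exists_scale:
  fixes d :: real and f :: "nat \<Rightarrow> real"
  assumes "0 < d" "\<And>s. 0 < f s"
  shows "\<exists>K N. K \<le> N \<and> 4 \<le> N \<and> 1 / 2 ^ K \<le> d / 2 \<and> 4 / 2 ^ N < d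
           \<and> (\<forall>s\<le>K. 2 ^ K / 2 ^ N < f s)"
proof -
  obtain K where "(1 / 2) ^ K < d / 2"
    using real_arch_pow_inv[of "d / 2" "1 / 2"] assms(1) by auto
  then have K: "1 / 2 ^ K \<le> d / 2" by (simp add: power_one_over)
  define e where "e = Min (f ` {..K})"
  have "0 < e" using assms(2) by (simp add: e_def)
  have e: "e \<le> f s" if "s \<le> K" for s
    unfolding e_def using that by (intro Min_le) auto
  obtain n where n: "2 ^ K / e + 4 / d < (2::real) ^ n"
    using real_arch_pow[of 2] by auto
  define N where "N = max n (K + 4)"
  have N: "K \<le> N" "4 \<le> N" by (simp_all add: N_def)
  have "(2::real) ^ n \<le> 2 ^ N" by (rule power_increasing) (simp_all add: N_def)
  moreover have "0 < 4 / d" "0 < 2 ^ K / e" using assms(1) \<open>0 < e\<close> by simp_all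
  ultimately have "2 ^ K / e < 2 ^ N" "4 / d < (2::real) ^ N" using n by linarith+
  then have "2 ^ K / 2 ^ N < e" "4 / 2 ^ N < d"
    using \<open>0 < e\<close> assms(1) by (simp_all add: field_simps)
  with e have "\<forall>s\<le>K. 2 ^ K / 2 ^ N < f s"
    by (auto intro: less_le_trans)
  with K N \<open>4 / 2 ^ N < d\<close> show ?thesis by blast
qed

lemma dT_ge_of_le_half:
  assumes "0 \<le> u" "u \<le> 1 / 2" "1 / 2 < b" "b < 1"
  shows "min (b - 1 / 2) (1 - b) \<le> dT u b"
proof -
  have "dT u b = min (b - u) (1 - (b - u))"
    using assms dT_unit_interval[of u b] by simp
  moreover have "min (b - 1 / 2) (1 - b) \<le> b - 1 / 2" "min (b - 1 / 2) (1 - b) \<le> 1 - b"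
    by simp_all
  ultimately show ?thesis using assms(1,2) by linarith
qed

lemma funpow_dbl_small:
  assumes "0 \<le> y" "y < 1" "t < N"
  shows "(dbl ^^ t) (y / 2 ^ N) = 2 ^ t * y / 2 ^ N" "2 ^ t * y / 2 ^ N \<le> 1 / 2"
proof -
  have "(2::real) ^ t * 2 \<le> 2 ^ N"
    using assms(3) power_increasing[of "Suc t" N "2::real"] by simp
  then have "2 ^ t / 2 ^ N \<le> (1 / 2 :: real)"
    by (simp add: field_simps)
  moreover have "2 ^ t * y / 2 ^ N \<le> 2 ^ t / 2 ^ N"
    using assms(1,2) by (intro divide_right_mono mult_left_le) simp_all
  ultimately show le: "2 ^ t * y / 2 ^ N \<le> 1 / 2"
    by linarith
  have "y < 2 ^ N" using assms(2) one_le_power[of "2::real" N] by linarith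
  with assms(1) have "0 \<le> y / 2 ^ N" "y / 2 ^ N < 1"
    by (simp_all add: field_simps)
  with le assms(1) show "(dbl ^^ t) (y / 2 ^ N) = 2 ^ t * y / 2 ^ N"
    by (simp add: funpow_dbl frac_eq)
qed

lemma dbl_quarter:
  assumes "q \<in> {1 / 4, 3 / 4}"
  shows "dbl q = 1 / 2"
proof -
  have "dbl (1 / 4) = 1 / 2" by (simp add: dbl_def frac_eq)
  moreover have "dbl (3 / 4) = 1 / 2" unfolding dbl_def by (subst frac_unique_iff) simp
  ultimately show ?thesis using assms by blast
qed

lemma funpow_dbl_quarter:
  assumes "q \<in> {1 / 4, 3 / 4}"
  shows "(dbl ^^ n) q \<in> {q, 1 / 2, 0}"
proof (induction n)
  case (Suc n)
  have images: "dbl q = 1 / 2" "dbl (1 / 2) = 0" "dbl 0 = 0"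
    using dbl_quarter[OF assms] by (simp_all add: dbl_def)
  from Suc consider "(dbl ^^ n) q = q" | "(dbl ^^ n) q = 1 / 2" | "(dbl ^^ n) q = 0"
    by blast
  then show ?case
    by cases (simp_all only: funpow.simps comp_apply images insert_iff simp_thms)
qed simp

lemma exists_quarter_off_orbit: "\<exists>q\<in>{1 / 4, 3 / 4 :: real}. \<forall>s. (dbl ^^ s) b \<noteq> q"
proof (rule ccontr)
  \<comment> \<open>Both quarters reach 0 through 1/2, so neither lies on the orbit of the other.\<close>
  assume "\<not> ?thesis"
  then obtain s1 s2 where s: "(dbl ^^ s1) b = 1 / 4" "(dbl ^^ s2) b = 3 / 4" by auto
  have later: "(dbl ^^ j) b = (dbl ^^ (j - i)) ((dbl ^^ i) b)" if "i \<le> j" for i j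
    using that by (simp flip: funpow_add[THEN fun_cong, unfolded comp_def])
  show False
  proof (cases "s1 \<le> s2")
    case True
    with s later[of s1 s2] have "(dbl ^^ (s2 - s1)) (1 / 4) = 3 / 4" by metis
    with funpow_dbl_quarter[of "1 / 4" "s2 - s1"] have "3 / 4 \<in> {1 / 4, 1 / 2, 0 :: real}" by simp
    then show False by simp
  next
    case False
    with s later[of s2 s1] have "(dbl ^^ (s1 - s2)) (3 / 4) = 1 / 4" by (metis nat_le_linear)
    with funpow_dbl_quarter[of "3 / 4" "s1 - s2"] have "1 / 4 \<in> {3 / 4, 1 / 2, 0 :: real}" by simp
    then show False by simp
  qed
qed

(* Cells of K_d reach the cell of 0 along the orbit q, 1/2, 0; the points y / M of
   cell 0 stay in [0, 1/2] until they reach y. *)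
lemma cell_zero_hub_cell:
  assumes M: "M = 2 ^ N" "K \<le> N" and b: "1 / 2 < b" "b < 1" and q: "q \<in> {1 / 4, 3 / 4}"
    and scale: "1 / 2 ^ K \<le> d / 2" "4 / real M < d"
    and junction: "\<And>s. s \<le> K \<Longrightarrow> 2 ^ K / real M < min (min (b - 1 / 2) (1 - b)) (dT q ((dbl ^^ s) b))"
  shows "hub_cell M b d 0"
proof -
  have "0 < M" using M by simp
  have "1 / real M \<le> 2 ^ K / real M" by (simp add: divide_right_mono)
  moreover have "4 / real M = 4 * (1 / real M)" "0 < 1 / real M" using \<open>0 < M\<close> by simp_all
  moreover have "2 ^ K / real M < b - 1 / 2" "2 ^ K / real M < 1 - b" "2 ^ K / real M < dT q b"
    using junction[of 0] by simp_all
  ultimately have "1 / real M < d / 2" "1 / real M < d" "1 / real M < b - 1 / 2" "1 / real M < 1 - b"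
    "1 / real M < dT q b"
    using scale(2) by linarith+
  then have far_half: "1 / real M < dT u b" if "0 \<le> u" "u \<le> 1 / 2" for u
    using dT_ge_of_le_half[OF that b] by (simp add: min_le_iff_disj) linarith
  have far_orbit: "1 / real M < dT u b" if "u \<in> {q, 1 / 2, 0}" for u
    using that by (elim insertE emptyE; hypsubst) (use far_half \<open>1 / real M < dT q b\<close> in simp_all)
  have far_small: "1 / real M < dT ((dbl ^^ t) ((real 0 + y) / real M)) b"
    if "t < N" "0 \<le> y" "y < 1" for t y
    using funpow_dbl_small[OF that(2,3,1)] far_half that(2) M(1) by simp
  have "dbl (1 / 2) = 0" by (simp add: dbl_def)
  then have "(dbl ^^ 2) q = 0"
    using dbl_quarter[OF q] by (simp only: numeral_2_eq_2 funpow.simps comp_apply id_apply)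
  have "0 \<le> q" "q < 1" using q by auto
  let ?G = "pruned_graph M b"
  have paths: "(cell_index M y, 0) \<in> ?G\<^sup>* \<and> (0, cell_index M y) \<in> ?G\<^sup>*"
    if y: "0 \<le> y" "y < 1" "\<And>n. d \<le> dT ((dbl ^^ n) y) b" for y
  proof
    show "(cell_index M y, 0) \<in> ?G\<^sup>*"
      using forward_path[OF M y scale(1) \<open>1 / real M < d / 2\<close> \<open>0 \<le> q\<close> \<open>q < 1\<close>, of 2] junction
        far_orbit[OF funpow_dbl_quarter[OF q]] \<open>(dbl ^^ 2) q = 0\<close> by (simp add: cell_index_def)
    show "(0, cell_index M y) \<in> ?G\<^sup>*"
      using backward_path[OF M(1) \<open>0 < M\<close> y(1,2) far_small[OF _ y(1,2)]] y(3)[of 0] \<open>1 / real M < d\<close>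
      by simp
  qed
  have "(0, 0) \<in> ?G"
    using cell_index_not_bad[of 0 M b] far_half[of 0] \<open>0 < M\<close>
    by (simp add: pruned_graph_def doubling_graph_def cell_index_def)
  then show "hub_cell M b d 0"
    using hub_cellI[OF \<open>0 < M\<close> paths relpow_of_loop] by blast
qed

lemma exists_hub_cell_upper:
  assumes b: "1 / 2 < b" "b < 1" and "0 < d"
  shows "\<exists>N\<ge>4. hub_cell (2 ^ N) b d 0"
proof -
  obtain q where q: "q \<in> {1 / 4, 3 / 4}" "\<And>s. (dbl ^^ s) b \<noteq> q"
    using exists_quarter_off_orbit by blast
  then have "0 \<le> q" "q < 1" by auto
  have "0 < dT q ((dbl ^^ s) b)" for s
    using dT_pos[OF \<open>0 \<le> q\<close> \<open>q < 1\<close>] funpow_dbl_range[of b s] b not_sym[OF q(2)[of s]] by simp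
  with b have "0 < min (min (b - 1 / 2) (1 - b)) (dT q ((dbl ^^ s) b))" for s
    by simp
  then obtain K N where KN: "K \<le> N" "4 \<le> N" "1 / 2 ^ K \<le> d / 2" "4 / 2 ^ N < d"
    "\<forall>s\<le>K. 2 ^ K / 2 ^ N < min (min (b - 1 / 2) (1 - b)) (dT q ((dbl ^^ s) b))"
    using exists_scale[OF \<open>0 < d\<close>, of "\<lambda>s. min (min (b - 1 / 2) (1 - b)) (dT q ((dbl ^^ s) b))"]
    by blast
  have "hub_cell (2 ^ N) b d 0"
    by (rule cell_zero_hub_cell[OF refl KN(1) b q(1) KN(3)]) (use KN(4,5) in simp_all)
  with KN(2) show ?thesis by blast
qed

lemma funpow_mem_of_closed: "(\<And>x. x \<in> A \<Longrightarrow> f x \<in> A) \<Longrightarrow> x \<in> A \<Longrightarrow> (f ^^ n) x \<in> A"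
  by (induction n) auto

lemma dbl_thirds: "dbl (1 / 3) = 2 / 3" "dbl (2 / 3) = 1 / 3"
  unfolding dbl_def by (subst frac_unique_iff, simp)+

lemma dbl_sevenths: "dbl (1 / 7) = 2 / 7" "dbl (2 / 7) = 4 / 7" "dbl (4 / 7) = 1 / 7"
  unfolding dbl_def by (subst frac_unique_iff, simp)+

lemma funpow_dbl_third: "(dbl ^^ n) (1 / 3) \<in> {1 / 3, 2 / 3}"
proof (rule funpow_mem_of_closed)
  fix x :: real assume "x \<in> {1 / 3, 2 / 3}"
  then show "dbl x \<in> {1 / 3, 2 / 3}"
    by (elim insertE emptyE; hypsubst) (simp_all add: dbl_thirds)
qed simp

lemma funpow_dbl_seventh: "(dbl ^^ n) (1 / 7) \<in> {1 / 7, 2 / 7, 4 / 7}"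
proof (rule funpow_mem_of_closed)
  fix x :: real assume "x \<in> {1 / 7, 2 / 7, 4 / 7}"
  then show "dbl x \<in> {1 / 7, 2 / 7, 4 / 7}"
    by (elim insertE emptyE; hypsubst) (simp_all add: dbl_sevenths)
qed simp

lemma dT_funpow_dbl_third: "1 / 3 \<le> dT ((dbl ^^ n) (1 / 3)) 0"
  using funpow_dbl_third[of n] dT_unit_interval[of _ 0] by auto

lemma dT_funpow_dbl_seventh: "1 / 7 \<le> dT ((dbl ^^ n) (1 / 7)) 0"
  using funpow_dbl_seventh[of n] dT_unit_interval[of _ 0] by auto

(* Since 0 is the only fixed point, aperiodicity comes from the closed walks of
   lengths 2 and 3 along the orbits of 1/3 and 1/7. *)
lemma cell_third_hub_cell:
  assumes M: "M = 2 ^ N" "K \<le> N" "4 \<le> N" and "d \<le> 1 / 8"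
    and scale: "1 / 2 ^ K \<le> d / 2" "4 / real M < d" "2 ^ K / real M < 1 / 3"
  shows "hub_cell M 0 d (cell_index M (1 / 3))"
proof -
  have "0 < M" using M by simp
  have "1 / real M \<le> 2 ^ K / real M" by (simp add: divide_right_mono)
  moreover have "4 / real M = 4 * (1 / real M)" "0 < 1 / real M" using \<open>0 < M\<close> by simp_all
  ultimately have "1 / real M < d / 2" "1 / real M < 1 / 3"
    using scale(2,3) by linarith+
  then have third: "1 / real M < dT ((dbl ^^ t) (1 / 3)) 0" "1 / 3 \<le> dT ((dbl ^^ t) (1 / 3)) 0"
    and seventh: "d \<le> dT ((dbl ^^ t) (1 / 7)) 0" "1 / real M < dT ((dbl ^^ t) (1 / 7)) 0" for t
    using dT_funpow_dbl_third[of t] dT_funpow_dbl_seventh[of t] \<open>d \<le> 1 / 8\<close> by linarith+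
  let ?G = "pruned_graph M 0"
  define h where "h = cell_index M (1 / 3)"
  have paths: "(cell_index M y, h) \<in> ?G\<^sup>* \<and> (h, cell_index M y) \<in> ?G\<^sup>*"
    if y: "0 \<le> y" "y < 1" "\<And>n. d \<le> dT ((dbl ^^ n) y) 0" for y
  proof
    have "2 ^ K / real M < dT (1 / 3) ((dbl ^^ s) 0)" for s
      using third(2)[of 0] scale(3) unfolding funpow_dbl_zero funpow_0 by linarith
    with forward_path[OF M(1,2) y scale(1) \<open>1 / real M < d / 2\<close>, of "1 / 3" 0] third(1)[of 0]
    show "(cell_index M y, h) \<in> ?G\<^sup>*" by (simp add: h_def)
    have "4 / real M < dT y 0" using y(3)[of 0] scale(2) by simp
    with backward_path_zero[OF M(1,3) _ _ third(2) y(1,2)]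
    show "(h, cell_index M y) \<in> ?G\<^sup>*" by (simp add: h_def)
  qed
  define h7 where "h7 = cell_index M (1 / 7)"
  have period: "(dbl ^^ 2) (1 / 3) = 1 / 3" "(dbl ^^ 3) (1 / 7) = 1 / 7"
    by (simp_all only: numeral_2_eq_2 numeral_3_eq_3 funpow.simps comp_apply id_apply
        dbl_thirds dbl_sevenths)
  have "(h, h) \<in> ?G ^^ 2" "(h7, h7) \<in> ?G ^^ 3"
    using orbit_path[OF \<open>0 < M\<close>, of "1 / 3" 2 0, unfolded period(1)]
      orbit_path[OF \<open>0 < M\<close>, of "1 / 7" 3 0, unfolded period(2)] third(1) seventh(2)
    by (simp_all add: h_def h7_def)
  moreover have "(h, h7) \<in> ?G\<^sup>*" "(h7, h) \<in> ?G\<^sup>*"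
    using paths[of "1 / 7"] seventh(1) by (simp_all add: h7_def)
  ultimately obtain n0 where "\<And>n. n0 \<le> n \<Longrightarrow> (h, h) \<in> ?G ^^ n"
    using eventually_closed_walks by metis
  moreover have "h < M" using cell_index_less[OF _ _ \<open>0 < M\<close>, of "1 / 3"] by (simp add: h_def)
  ultimately have "hub_cell M 0 d h"
    using hub_cellI[of h M d 0, OF _ paths] by blast
  then show ?thesis by (simp add: h_def)
qed

lemma exists_hub_cell_zero:
  assumes "0 < d" "d \<le> 1 / 8"
  shows "\<exists>N\<ge>4. \<exists>h. hub_cell (2 ^ N) 0 d h"
proof -
  obtain K N where KN: "K \<le> N" "4 \<le> N" "1 / 2 ^ K \<le> d / 2" "4 / 2 ^ N < d"
    "(2::real) ^ K / 2 ^ N < 1 / 3"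
    using exists_scale[OF assms(1), of "\<lambda>_. 1 / 3"] by auto
  have "hub_cell (2 ^ N) 0 d (cell_index (2 ^ N) (1 / 3))"
    by (rule cell_third_hub_cell[OF refl KN(1,2) assms(2) KN(3)]) (use KN(4,5) in simp_all)
  with KN(2) show ?thesis by blast
qed

lemma exists_hub_cell:
  assumes "0 \<le> b" "b < 1" "b \<noteq> 1 / 2" "0 < d" "d \<le> 1 / 8"
  shows "\<exists>N\<ge>4. \<exists>h. hub_cell (2 ^ N) b d h"
proof -
  consider "b = 0" | "1 / 2 < b" | "0 < b" "b < 1 / 2" using assms(1,3) by linarith
  then show ?thesis
  proof cases
    case 1
    with exists_hub_cell_zero assms(4,5) show ?thesis by blast
  next
    case 2
    with exists_hub_cell_upper assms(2,4) show ?thesis by blast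
  next
    case 3
    then obtain N where "4 \<le> N" "hub_cell (2 ^ N) (1 - b) d 0"
      using exists_hub_cell_upper[of "1 - b"] assms(4) by auto
    moreover have "frac (- (1 - b)) = b" using 3 by (simp add: frac_unique_iff)
    ultimately show ?thesis using hub_cell_reflect[of "1 - b"] 3 by fastforce
  qed
qed

section \<open>The Markov subsystem of a hub\<close>

lemma trans_graph_cells:
  assumes "j < m" "k < m" "(s j, s k) \<in> doubling_graph M"
  shows "(j, k) \<in> trans_graph m (\<lambda>j. real (s j) / real M) (\<lambda>_. 1 / real M)"
  using assms cell_transition[OF assms(3)] by (simp add: trans_graph_def cell_def)

lemma trans_graph_walks:
  assumes "bij_betw s {..<m} {k. (h, k) \<in> G\<^sup>* \<and> (k, h) \<in> G\<^sup>*}" "G \<subseteq> doubling_graph M"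
    and "j < m" "k < m" "(s j, s k) \<in> G ^^ n"
  shows "(j, k) \<in> trans_graph m (\<lambda>j. real (s j) / real M) (\<lambda>_. 1 / real M) ^^ n"
proof -
  let ?S = "{k. (h, k) \<in> G\<^sup>* \<and> (k, h) \<in> G\<^sup>*}"
  have "s j \<in> ?S" "s k \<in> ?S" using assms(1,3,4) by (auto simp: bij_betw_def)
  then have "(s j, s k) \<in> Restr G ?S ^^ n"
    using relpow_Restr_scc[OF assms(5)] by simp
  moreover have "(j', k') \<in> trans_graph m (\<lambda>j. real (s j) / real M) (\<lambda>_. 1 / real M)"
    if "j' < m" "k' < m" "(s j', s k') \<in> Restr G ?S" for j' k'
    using that assms(2) by (intro trans_graph_cells) auto
  ultimately show ?thesis
    using relpow_pullback[OF assms(1), of "Restr G ?S"] assms(3,4) by blast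
qed

lemma irreducible_aperiodic_cells:
  assumes s: "bij_betw s {..<m} {k. (h, k) \<in> G\<^sup>* \<and> (k, h) \<in> G\<^sup>*}" and "G \<subseteq> doubling_graph M"
    and loops: "\<And>n. n0 \<le> n \<Longrightarrow> (h, h) \<in> G ^^ n"
  shows "irreducible_ms m (\<lambda>j. real (s j) / real M) (\<lambda>_. 1 / real M)"
    and "aperiodic_ms m (\<lambda>j. real (s j) / real M) (\<lambda>_. 1 / real M)"
proof -
  let ?S = "{k. (h, k) \<in> G\<^sup>* \<and> (k, h) \<in> G\<^sup>*}"
  let ?T = "trans_graph m (\<lambda>j. real (s j) / real M) (\<lambda>_. 1 / real M)"
  have sS: "(h, s j) \<in> G\<^sup>*" "(s j, h) \<in> G\<^sup>*" if "j < m" for j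
    using s that by (auto simp: bij_betw_def)
  note walks = trans_graph_walks[OF s assms(2)]
  show "irreducible_ms m (\<lambda>j. real (s j) / real M) (\<lambda>_. 1 / real M)"
    unfolding irreducible_ms_def
  proof (intro allI impI)
    fix j k assume "j < m" "k < m"
    then have "(s j, s k) \<in> G\<^sup>*" using sS by (meson rtrancl_trans)
    then show "(j, k) \<in> ?T\<^sup>*"
      using walks \<open>j < m\<close> \<open>k < m\<close> by (meson relpow_imp_rtrancl rtrancl_imp_relpow)
  qed
  have "finite ?S" using s bij_betw_finite by blast
  then obtain P where "1 \<le> P" "\<forall>u\<in>?S. \<forall>v\<in>?S. (u, v) \<in> G ^^ P"
    using relpow_uniform_length[of ?S h G n0] loops by blast
  with walks sS have "\<forall>j<m. \<forall>k<m. (j, k) \<in> ?T ^^ P" by blast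
  with \<open>1 \<le> P\<close> show "aperiodic_ms m (\<lambda>j. real (s j) / real M) (\<lambda>_. 1 / real M)"
    unfolding aperiodic_ms_def by blast
qed

lemma markov_subsystem_cells:
  assumes M: "M = 2 ^ N" "2 \<le> N" and "1 \<le> m" "inj_on s {..<m}"
    and good: "\<And>j. j < m \<Longrightarrow> s j < M \<and> s j \<notin> bad_cells M b"
  shows "markov_subsystem b m (\<lambda>j. real (s j) / real M) (\<lambda>_. 1 / real M)"
  unfolding markov_subsystem_def
proof (intro conjI allI impI)
  have "(2::real) ^ 2 \<le> 2 ^ N" using M(2) by (rule power_increasing) simp
  then have M_large: "1 / real M < 1 / 2" "2 / real M < 1" using M(1) by (simp_all add: field_simps)
  then show "0 < 1 / real M" "1 / real M < 1" using M(1) by simp_all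
  show "1 \<le> m" by fact
  fix j assume "j < m"
  then show "b \<notin> arc (real (s j) / real M) (1 / real M)"
    using good by (simp add: bad_cells_def cell_def)
  show "inj_on dbl (arc (real (s j) / real M) (1 / real M))"
    using M_large(1) by (rule inj_on_dbl_arc)
  show "is_closed_subinterval (dbl ` arc (real (s j) / real M) (1 / real M))"
    unfolding is_closed_subinterval_def dbl_image_arc using M_large(2) M(1)
    by (intro exI[of _ "2 * (real (s j) / real M)"] exI[of _ "2 * (1 / real M)"]) simp
next
  fix j k assume "j < m" "k < m"
  then show "j \<noteq> k \<Longrightarrow>
      arc_open (real (s j) / real M) (1 / real M) \<inter> arc_open (real (s k) / real M) (1 / real M) = {}"
    using good assms(4) by (intro cell_interiors_disjoint) (auto simp: inj_on_def)
  show "dbl ` arc_open (real (s j) / real M) (1 / real M) \<inter> arc_open (real (s k) / real M) (1 / real M) = {}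
      \<or> arc (real (s k) / real M) (1 / real M) \<subseteq> dbl ` arc (real (s j) / real M) (1 / real M)"
  proof (cases "(s j, s k) \<in> doubling_graph M")
    case True
    then show ?thesis using cell_transition by (simp add: cell_def)
  next
    case False
    have "even M" using M by simp
    with False good \<open>j < m\<close> \<open>k < m\<close> show ?thesis
      using cell_no_transition[of M "s j" "s k"] by blast
  qed
qed

lemma hub_component_good:
  assumes "hub_cell M b d h" "(h, k) \<in> (pruned_graph M b)\<^sup>*"
  shows "k < M \<and> k \<notin> bad_cells M b"
proof -
  obtain n0 where "\<forall>n\<ge>n0. (h, h) \<in> pruned_graph M b ^^ n"
    using assms(1) by (auto simp: hub_cell_def)
  then have "(h, h) \<in> pruned_graph M b ^^ Suc n0" by (meson le_SucI order_refl)
  then have "(h, h) \<in> (pruned_graph M b)\<^sup>+"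
    using trancl_power by blast
  with assms(2) have "(h, k) \<in> (pruned_graph M b)\<^sup>+" by simp
  then obtain u where "(u, k) \<in> pruned_graph M b" by (blast elim: tranclE)
  then show ?thesis by (auto simp: pruned_graph_def doubling_graph_def)
qed

lemma hub_cell_covers_K_set:
  assumes "hub_cell M b d h" "x \<in> K_set b d"
  shows "\<exists>k. (dbl ^^ n) x \<in> cell M k \<and>
    (h, k) \<in> (pruned_graph M b)\<^sup>* \<and> (k, h) \<in> (pruned_graph M b)\<^sup>*"
proof -
  have x: "0 \<le> x" "x < 1" "\<And>n. d \<le> dT ((dbl ^^ n) x) b"
    using assms(2) by (auto simp: K_set_def circ_def)
  have "d \<le> dT ((dbl ^^ k) ((dbl ^^ n) x)) b" for k
    using x(3)[of "k + n"] by (simp add: funpow_add)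
  with funpow_dbl_range[OF x(1,2), of n] assms(1) show ?thesis
    unfolding hub_cell_def by blast
qed

lemma hub_cell_markov:
  assumes M: "M = 2 ^ N" "2 \<le> N" and hub: "hub_cell M b d h"
  shows "\<exists>m a l. markov_subsystem b m a l \<and> irreducible_ms m a l \<and> aperiodic_ms m a l
           \<and> K_set b d \<subseteq> max_inv_set m a l \<and> b \<notin> max_inv_set m a l"
proof -
  let ?G = "pruned_graph M b"
  define S where "S = {k. (h, k) \<in> ?G\<^sup>* \<and> (k, h) \<in> ?G\<^sup>*}"
  have good: "k < M \<and> k \<notin> bad_cells M b" if "k \<in> S" for k
    using hub_component_good[OF hub] that by (simp add: S_def)
  then have "finite S" by (meson finite_nat_set_iff_bounded)
  then obtain s where s: "bij_betw s {..<card S} S"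
    using ex_bij_betw_nat_finite by (metis atLeast0LessThan)
  define m a l where "m = card S" and "a = (\<lambda>j. real (s j) / real M)" and "l = (\<lambda>_::nat. 1 / real M)"
  have "h \<in> S" by (simp add: S_def)
  with \<open>finite S\<close> have "1 \<le> m" by (simp add: m_def Suc_le_eq card_gt_0_iff) blast
  have sS: "s j \<in> S" if "j < m" for j using s that by (auto simp: m_def bij_betw_def)
  have surj: "\<exists>j<m. s j = k" if "k \<in> S" for k using s that by (force simp: m_def bij_betw_def)
  obtain n0 where loops: "\<And>n. n0 \<le> n \<Longrightarrow> (h, h) \<in> ?G ^^ n" using hub by (auto simp: hub_cell_def)
  have "irreducible_ms m a l" "aperiodic_ms m a l"
    using irreducible_aperiodic_cells[OF s[unfolded S_def] pruned_graph_subset loops]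
    by (simp_all add: m_def a_def l_def S_def)
  moreover have "markov_subsystem b m a l"
    unfolding a_def l_def using markov_subsystem_cells[OF M \<open>1 \<le> m\<close>] s good sS
    by (simp add: m_def bij_betw_def)
  moreover have "K_set b d \<subseteq> max_inv_set m a l"
  proof
    fix x assume "x \<in> K_set b d"
    then have "\<exists>j<m. (dbl ^^ n) x \<in> arc (a j) (l j)" for n
      using hub_cell_covers_K_set[OF hub] surj by (fastforce simp: S_def a_def l_def cell_def)
    then show "x \<in> max_inv_set m a l" by (auto simp: max_inv_set_def)
  qed
  moreover have "b \<notin> max_inv_set m a l"
  proof
    assume "b \<in> max_inv_set m a l"
    then have "(dbl ^^ 0) b \<in> (\<Union>j<m. arc (a j) (l j))" unfolding max_inv_set_def by blast
    then obtain j where "j < m" "b \<in> cell M (s j)" by (auto simp: a_def l_def cell_def)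
    with good sS show False by (auto simp: bad_cells_def)
  qed
  ultimately show ?thesis by blast
qed

lemma frac_half_minus_ne_half:
  fixes c :: real
  assumes "0 < c" "c < 1"
  shows "frac (1 / 2 - c) \<noteq> 1 / 2"
proof
  assume "frac (1 / 2 - c) = 1 / 2"
  then have "1 / 2 - c - 1 / 2 \<in> \<int>" by (simp only: frac_unique_iff)
  then have "c \<in> \<int>" by simp
  then obtain k :: int where "c = of_int k" by (elim Ints_cases)
  with assms show False by simp
qed

lemma K_set_antimono: "d \<le> \<delta> \<Longrightarrow> K_set b \<delta> \<subseteq> K_set b d"
  by (auto simp: K_set_def intro: order_trans)

theorem proposition6p2:
  fixes c \<delta> :: real
  assumes "0 < c" and "c < 1" and "0 < \<delta>"
  defines "b \<equiv> frac (1/2 - c)"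
  shows "\<exists>m a l. markov_subsystem b m a l \<and> irreducible_ms m a l \<and> aperiodic_ms m a l
           \<and> K_set b \<delta> \<subseteq> max_inv_set m a l \<and> b \<notin> max_inv_set m a l"
proof -
  have b: "0 \<le> b" "b < 1" "b \<noteq> 1 / 2"
    using frac_half_minus_ne_half[OF assms(1,2)] by (simp_all add: b_def frac_lt_1)
  define d where "d = min \<delta> (1 / 8)"
  have d: "0 < d" "d \<le> 1 / 8" "d \<le> \<delta>" using assms(3) by (simp_all add: d_def)
  obtain N h where "4 \<le> N" "hub_cell (2 ^ N) b d h"
    using exists_hub_cell[OF b d(1,2)] by blast
  moreover have "2 \<le> N" using \<open>4 \<le> N\<close> by simp
  ultimately obtain m a l where "markov_subsystem b m a l" "irreducible_ms m a l" "aperiodic_ms m a l"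
    "K_set b d \<subseteq> max_inv_set m a l" "b \<notin> max_inv_set m a l"
    using hub_cell_markov[OF refl] by blast
  with K_set_antimono[OF d(3)] show ?thesis by blast
qed

end
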